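(* Let $N\ge 1$ be an integer and let $P=p_1p_2\cdots p_k$ be a product of $k\ge1$ primes. For $1\le n\le N$ let $\widetilde w_n\in\{0,1,\dots,P-1\}$ be the remainder of $w_n$ upon division by $P$. If $N\,\widetilde w_n<P$ for each $1\le n\le N$, then $\widetilde w_n=w_n$ for each $1\le n\le N$.
   Context: The stack-sorting map $s$ is defined recursively: $s$ sends the empty permutation to itself, and if $\pi$ is nonempty with largest entry $m$, written $\pi=LmR$, then $s(\pi)=s(L)\,s(R)\,m$. A permutation $\pi$ is $3$-stack-sortable if $s(s(s(\pi)))$ is increasing. $w_n$ denotes the number of $3$-stack-sortable permutations of $\{1,\dots,n\}$. *)

theory Defs
  imports Main "HOL-Computational_Algebra.Primes" "HOL-Combinatorics.Multiset_Permutations"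
begin

function stack_sort :: "nat list \<Rightarrow> nat list" where
  "stack_sort [] = []"
| "stack_sort (x # xs) =
     (let m = Max (set (x # xs));
          L = takeWhile (\<lambda>y. y \<noteq> m) (x # xs);
          R = tl (dropWhile (\<lambda>y. y \<noteq> m) (x # xs))
      in stack_sort L @ stack_sort R @ [m])"
  by pat_completeness auto
termination
proof (relation "measure length")
  fix x :: nat and xs m L
  assume m: "m = Max (set (x # xs))" and L: "L = takeWhile (\<lambda>y. y \<noteq> m) (x # xs)"
  have mi: "m \<in> set (x # xs)" unfolding m by (rule Max_in) auto
  have ne: "L \<noteq> x # xs"
    using mi unfolding L by (metis (mono_tags, lifting) takeWhile_eq_all_conv)
  have "length L \<noteq> length (x # xs)"
  proof
    assume "length L = length (x # xs)"
    then have "L = take (length L) (x # xs)" unfolding L by (metis takeWhile_eq_take)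
    then show False using ne \<open>length L = length (x # xs)\<close> by simp
  qed
  moreover have "length L \<le> length (x # xs)" unfolding L by (rule length_takeWhile_le)
  ultimately show "(L, x # xs) \<in> measure length" by simp
next
  fix x :: nat and xs m L R
  assume "R = tl (dropWhile (\<lambda>y. y \<noteq> m) (x # xs))"
  then show "(R, x # xs) \<in> measure length"
  proof -
    have "length (dropWhile (\<lambda>y. y \<noteq> m) (x # xs)) \<le> length (x # xs)"
      by (rule length_dropWhile_le)
    then have "length R < length (x # xs)"
      unfolding \<open>R = _\<close> by (simp del: dropWhile.simps)
    then show ?thesis by simp
  qed
qed auto

definition three_stack_sortable :: "nat list \<Rightarrow> bool" where
  "three_stack_sortable \<pi> \<longleftrightarrow> sorted_wrt (<) (stack_sort (stack_sort (stack_sort \<pi>)))"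

definition w :: "nat \<Rightarrow> nat" where
  "w n = card {\<pi> \<in> permutations_of_set {1..n}. three_stack_sortable \<pi>}"

end

theory Submission
  imports Defs
begin

text \<open>Deleting the entry 1 from a 3-stack-sortable permutation of \<open>{1..n+1}\<close> leaves a
  3-stack-sortable permutation of \<open>{2..n+1}\<close>, because \<open>s\<close> commutes with discarding all entries
  below a threshold and with order-preserving relabelling. Hence every 3-stack-sortable
  permutation of \<open>{1..n+1}\<close> arises by inserting 1 into one of \<open>n+1\<close> positions of a shifted
  3-stack-sortable permutation of \<open>{1..n}\<close>, so \<open>w (n+1) \<le> (n+1) w n\<close>. Starting from \<open>w 0 = 1 < P\<close>,
  the hypothesis \<open>N w\<^sub>n < P\<close> then propagates \<open>w\<^sub>n < P\<close> from \<open>n\<close> to \<open>n+1\<close> for all \<open>n \<le> N\<close>.\<close>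

lemma Max_split_induct [case_names Nil split]:
  fixes xs :: "'a::linorder list"
  assumes "P []"
    and "\<And>L m R. m \<notin> set L \<Longrightarrow> \<forall>y\<in>set (L @ R). y \<le> m \<Longrightarrow> P L \<Longrightarrow> P R \<Longrightarrow> P (L @ m # R)"
  shows "P xs"
proof (induction xs rule: length_induct)
  case (1 xs)
  show ?case
  proof (cases "xs = []")
    case True
    then show ?thesis using assms(1) by simp
  next
    case False
    obtain m where "m \<in> set xs" and m_max: "\<forall>y\<in>set xs. y \<le> m"
      using False by (metis Max_ge Max_in finite_set set_empty)
    then obtain L R where xs: "xs = L @ m # R" and notin: "m \<notin> set L"
      using split_list_first by metis
    have "\<forall>y\<in>set (L @ R). y \<le> m"
      using m_max unfolding xs by simp
    moreover have "P L" "P R"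
      using "1.IH" unfolding xs by simp_all
    ultimately show ?thesis
      using assms(2)[OF notin] xs by simp
  qed
qed

lemma stack_sort_append_Max:
  assumes "m \<notin> set L" and "\<forall>y\<in>set (L @ R). y \<le> m"
  shows "stack_sort (L @ m # R) = stack_sort L @ stack_sort R @ [m]"
proof -
  obtain x xs where xs: "L @ m # R = x # xs"
    by (cases L) auto
  have "Max (set (L @ m # R)) = m"
    using assms(2) by (intro Max_eqI) auto
  moreover have "takeWhile (\<lambda>y. y \<noteq> m) (L @ m # R) = L"
    using assms(1) by (auto simp: takeWhile_append)
  moreover have "dropWhile (\<lambda>y. y \<noteq> m) (L @ m # R) = m # R"
    using assms(1) by (auto simp: dropWhile_append)
  ultimately show ?thesis
    unfolding xs stack_sort.simps(2) Let_def by (simp only: xs list.sel(3))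
qed

lemma set_stack_sort [simp]: "set (stack_sort xs) = set xs"
  by (induction xs rule: Max_split_induct) (auto simp: stack_sort_append_Max)

lemma stack_sort_map_strict_mono:
  assumes "strict_mono f"
  shows "stack_sort (map f xs) = map f (stack_sort xs)"
proof (induction xs rule: Max_split_induct)
  case Nil
  then show ?case by simp
next
  case (split L m R)
  have "f m \<notin> set (map f L)"
    using split.hyps(1) strict_mono_eq[OF assms] by auto
  moreover have "\<forall>y\<in>set (map f L @ map f R). y \<le> f m"
    using split.hyps(2) strict_mono_less_eq[OF assms] by auto
  ultimately show ?case
    using split.hyps split.IH by (simp add: stack_sort_append_Max)
qed

lemma filter_greater_stack_sort:
  "filter (\<lambda>y. a < y) (stack_sort xs) = stack_sort (filter (\<lambda>y. a < y) xs)"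
proof (induction xs rule: Max_split_induct)
  case Nil
  then show ?case by simp
next
  case (split L m R)
  show ?case
  proof (cases "a < m")
    case True
    have "stack_sort (filter (\<lambda>y. a < y) L @ m # filter (\<lambda>y. a < y) R)
        = stack_sort (filter (\<lambda>y. a < y) L) @ stack_sort (filter (\<lambda>y. a < y) R) @ [m]"
      using split.hyps by (intro stack_sort_append_Max) auto
    then show ?thesis
      using True split by (simp add: stack_sort_append_Max)
  next
    case False
    then have "\<forall>y\<in>set (L @ m # R). \<not> a < y"
      using split.hyps(2) by force
    then show ?thesis
      by (simp add: filter_empty_conv)
  qed
qed

lemma three_stack_sortable_map_strict_mono:
  assumes "strict_mono f"
  shows "three_stack_sortable (map f xs) \<longleftrightarrow> three_stack_sortable xs"
  using strict_mono_less[OF assms]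
  by (simp add: three_stack_sortable_def stack_sort_map_strict_mono[OF assms] sorted_wrt_map)

lemma three_stack_sortable_filter_greater:
  assumes "three_stack_sortable xs"
  shows "three_stack_sortable (filter (\<lambda>y. a < y) xs)"
  using assms unfolding three_stack_sortable_def
  by (simp add: filter_greater_stack_sort[symmetric] sorted_wrt_filter)

lemma w_0: "w 0 = 1"
proof -
  have "{\<pi> \<in> permutations_of_set {1..0::nat}. three_stack_sortable \<pi>} = {[]}"
    by (auto simp: three_stack_sortable_def)
  then show ?thesis by (simp add: w_def)
qed

lemma w_Suc_le: "w (Suc n) \<le> Suc n * w n"
proof -
  define S where "S m = {\<pi> \<in> permutations_of_set {1..m}. three_stack_sortable \<pi>}" for m
  define insert_one :: "nat \<times> nat list \<Rightarrow> nat list"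
    where "insert_one = (\<lambda>(i, \<tau>). take i (map Suc \<tau>) @ 1 # drop i (map Suc \<tau>))"
  have "S (Suc n) \<subseteq> insert_one ` ({..n} \<times> S n)"
  proof
    fix \<pi> assume "\<pi> \<in> S (Suc n)"
    then have \<pi>: "set \<pi> = {1..Suc n}" "distinct \<pi>" "three_stack_sortable \<pi>"
      by (auto simp: S_def permutations_of_set_def)
    then have "1 \<in> set \<pi>" by simp
    then obtain ys zs where \<pi>_split: "\<pi> = ys @ 1 # zs"
      using split_list by metis
    have "set (ys @ zs) = set \<pi> - {1}"
      using \<pi>(2) unfolding \<pi>_split by auto
    also have "\<dots> = Suc ` {1..n}"
      unfolding \<pi>(1) by (auto simp: image_Suc_atLeastAtMost)
    finally have set_ys_zs: "set (ys @ zs) = Suc ` {1..n}" .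
    then have "ys @ zs \<in> permutations_of_set (Suc ` {1..n})"
      using \<pi>(2) unfolding \<pi>_split by (intro permutations_of_setI) simp_all
    then obtain \<tau> where \<tau>: "\<tau> \<in> permutations_of_set {1..n}" and ys_zs: "ys @ zs = map Suc \<tau>"
      using permutations_of_set_image_inj[of Suc "{1..n}"] by auto
    have "filter (\<lambda>y. 1 < y) (ys @ zs) = ys @ zs"
      unfolding filter_id_conv set_ys_zs by auto
    then have "filter (\<lambda>y. 1 < y) \<pi> = ys @ zs"
      unfolding \<pi>_split by simp
    then have "three_stack_sortable (map Suc \<tau>)"
      using three_stack_sortable_filter_greater[OF \<pi>(3), of 1] ys_zs by simp
    then have "\<tau> \<in> S n"
      using \<tau> three_stack_sortable_map_strict_mono[of Suc \<tau>] by (simp add: S_def strict_mono_def)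
    moreover have "length ys \<le> n"
      using \<pi> distinct_card[OF \<pi>(2)] unfolding \<pi>_split by simp
    moreover have "\<pi> = insert_one (length ys, \<tau>)"
      by (simp add: insert_one_def \<pi>_split ys_zs[symmetric])
    ultimately show "\<pi> \<in> insert_one ` ({..n} \<times> S n)" by blast
  qed
  then have "card (S (Suc n)) \<le> card (insert_one ` ({..n} \<times> S n))"
    by (intro card_mono) (auto simp: S_def)
  also have "\<dots> \<le> card ({..n} \<times> S n)"
    by (rule card_image_le) (simp add: S_def)
  finally show ?thesis
    by (simp add: w_def S_def card_cartesian_product)
qed

lemma less_modulus_of_growth_bound:
  fixes a :: "nat \<Rightarrow> nat"
  assumes growth: "\<And>n. a (Suc n) \<le> Suc n * a n"
    and "a 0 < P"
    and small: "\<forall>n\<in>{1..N}. N * (a n mod P) < P"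
    and "n \<le> N"
  shows "a n < P"
  using \<open>n \<le> N\<close>
proof (induction n)
  case 0
  then show ?case using \<open>a 0 < P\<close> by simp
next
  case (Suc n)
  then have "a n < P" by simp
  show ?case
  proof (cases n)
    case 0
    then show ?thesis using growth[of 0] \<open>a 0 < P\<close> by simp
  next
    case (Suc m)
    have "n \<in> {1..N}"
      using Suc.prems \<open>n = Suc m\<close> by simp
    then have "N * (a n mod P) < P"
      using small by blast
    then have "N * a n < P"
      using \<open>a n < P\<close> by simp
    moreover have "a (Suc n) \<le> N * a n"
      using growth[of n] Suc.prems mult_le_mono1 order_trans by blast
    ultimately show ?thesis by linarith
  qed
qed

lemma prod_list_primes_gt_1:
  fixes ps :: "nat list"
  assumes "ps \<noteq> []" and "\<forall>p\<in>set ps. prime p"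
  shows "prod_list ps > 1"
proof -
  obtain p where p: "p \<in> set ps" using assms(1) by fastforce
  then have "p dvd prod_list ps" by (rule prod_list_dvd)
  then have "prod_list ps \<noteq> 1" using assms(2) p by (auto simp: prime_nat_iff)
  moreover have "prod_list ps \<noteq> 0" using assms(2) by (auto simp: prod_list_zero_iff)
  ultimately show ?thesis by simp
qed

theorem proposition3p1:
  fixes N k :: nat and ps :: "nat list" and P :: nat
  assumes "N \<ge> 1"
    and "k \<ge> 1" and "length ps = k" and "\<forall>p \<in> set ps. prime p"
    and "P = prod_list ps"
    and "\<forall>n \<in> {1..N}. N * (w n mod P) < P"
  shows "\<forall>n \<in> {1..N}. w n mod P = w n"
proof -
  have "ps \<noteq> []"
    using assms(2,3) by auto
  then have "P > 1"
    using assms(4,5) prod_list_primes_gt_1 by simp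
  then have "w 0 < P" by (simp add: w_0)
  then have "w n < P" if "n \<le> N" for n
    using less_modulus_of_growth_bound[OF w_Suc_le _ assms(6) that] by simp
  then show ?thesis by simp
qed

end
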